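(* For all integers $3\le r\le n$, \[ \log p(n,r) \le \frac{1}{n-r+1}\binom{n}{r}\log\bigl(\mathrm{e}(n-r+1)\bigr). \]
   Context: $p(n,r)$ denotes the number of paving matroids of rank $r$ on the ground set $[n]=\{1,\dots,n\}$; a matroid of rank $r$ is paving if each of its circuits has cardinality at least $r$. $\log$ is the logarithm to base $2$ and $\mathrm{e}$ is Euler's number. *)

theory Defs
  imports Complex_Main
begin

definition matroid_indep :: "'a set \<Rightarrow> 'a set set \<Rightarrow> bool" where
  "matroid_indep E I \<longleftrightarrow>
     I \<subseteq> Pow E \<and> {} \<in> I \<and>
     (\<forall>A B. B \<in> I \<and> A \<subseteq> B \<longrightarrow> A \<in> I) \<and>
     (\<forall>A B. A \<in> I \<and> B \<in> I \<and> card A < card B \<longrightarrow> (\<exists>x\<in>B - A. insert x A \<in> I))"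

definition matroid_rank :: "'a set set \<Rightarrow> nat" where
  "matroid_rank I = Max (card ` I)"

definition matroid_circuit :: "'a set \<Rightarrow> 'a set set \<Rightarrow> 'a set \<Rightarrow> bool" where
  "matroid_circuit E I C \<longleftrightarrow> C \<subseteq> E \<and> C \<notin> I \<and> (\<forall>x\<in>C. C - {x} \<in> I)"

definition paving :: "'a set \<Rightarrow> 'a set set \<Rightarrow> bool" where
  "paving E I \<longleftrightarrow> (\<forall>C. matroid_circuit E I C \<longrightarrow> card C \<ge> matroid_rank I)"

definition num_paving :: "nat \<Rightarrow> nat \<Rightarrow> nat" where
  "num_paving n r = card {I. matroid_indep {1..n} I \<and> matroid_rank I = r \<and> paving {1..n} I}"

end

theory Submission imports Defs begin

text \<open>
  A paving matroid of rank \<open>r\<close> is determined by its hyperplanes of cardinality at least \<open>r\<close>,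
  and any two of them meet in fewer than \<open>r - 1\<close> elements. Choosing an \<open>(r - 1)\<close>-subset \<open>X\<close>
  of each such hyperplane \<open>U\<close> and recording the \<open>r\<close>-sets \<open>X \<union> {y}\<close>, \<open>y \<in> U - X\<close>, encodes the
  matroid injectively by a family \<open>F\<close> of \<open>r\<close>-subsets of the ground set. Each hyperplane
  contributes \<open>|U| - r + 1\<close> members to \<open>F\<close> but contains at least \<open>r (|U| - r + 1)\<close> of the
  \<open>(r - 1)\<close>-subsets of \<open>[n]\<close>, and no two hyperplanes share one; hence \<open>r |F| \<le> C(n, r - 1)\<close>, i.e.
  \<open>(n - r + 1) |F| \<le> C(n, r)\<close>. Families of at most \<open>N / m\<close> sets out of \<open>N\<close> number at most
  \<open>(e m)^(N / m)\<close>, by comparing with \<open>\<Sum>\<^sub>F m^(N/m - |F|) \<le> (1 + 1/m)^N m^(N/m)\<close>.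
\<close>

lemma le_choose_minus_2:
  assumes "3 \<le> r" "r \<le> h"
  shows "r \<le> h choose (r - 2)"
  using assms(2)
proof (induction h rule: dec_induct)
  case base
  have "r choose (r - 2) = r choose 2"
    using binomial_symmetric[of "r - 2" r] assms by auto
  moreover have "r * 2 \<le> r * (r - 1)"
    using assms(1) by simp
  ultimately show ?case
    using choose_two[of r] by linarith
next
  case (step h)
  have "r - 2 = Suc (r - 3)"
    using assms by auto
  then show ?case
    using step by simp
qed

lemma mult_diff_le_choose_pred:
  assumes "3 \<le> r" "r \<le> h"
  shows "r * (h - (r - 1)) \<le> h choose (r - 1)"
  using assms(2)
proof (induction h rule: dec_induct)
  case base
  have "r choose (r - 1) = r choose 1"
    using binomial_symmetric[of "r - 1" r] assms by auto
  then show ?case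
    by simp
next
  case (step h)
  have "r - 1 = Suc (r - 2)"
    using assms by auto
  then have "Suc h choose (r - 1) = (h choose (r - 2)) + (h choose (r - 1))"
    by simp
  moreover have "r \<le> h choose (r - 2)"
    using le_choose_minus_2 assms step by auto
  moreover have "r * (Suc h - (r - 1)) = r * (h - (r - 1)) + r"
    using step assms by (simp add: Suc_diff_le)
  ultimately show ?case
    using step by linarith
qed

lemma mult_choose_eq_choose_pred:
  assumes "1 \<le> r" "r \<le> n"
  shows "r * (n choose r) = (n - r + 1) * (n choose (r - 1))"
proof -
  obtain k where k: "r = Suc k"
    using assms by (cases r) auto
  have "Suc k * (n choose Suc k) = n * ((n - 1) choose k)"
    using times_binomial_minus1_eq[of "Suc k" n] by simp
  also have "\<dots> = (n - k) * (n choose k)"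
    using binomial_absorb_comp[of n k] by simp
  finally have "Suc k * (n choose Suc k) = (n - k) * (n choose k)" .
  moreover have "n - k = Suc (n - Suc k)"
    using k assms by auto
  ultimately show ?thesis
    using k by (simp del: mult_Suc)
qed

lemma card_bounded_subsets_le_powr:
  fixes R :: "'a set" and m :: real
  assumes fin: "finite R" and m: "1 \<le> m"
  shows "real (card {F. F \<subseteq> R \<and> m * card F \<le> card R}) \<le> (exp 1 * m) powr (card R / m)"
proof -
  define S where "S = {F. F \<subseteq> R \<and> m * card F \<le> card R}"
  define K where "K = card R / m"
  define x where "x = 1 / m"
  have x: "0 < x"
    using m unfolding x_def by auto
  have weight_ge_1: "1 \<le> x ^ card F * m powr K" if "F \<in> S" for F
  proof -
    have "card F \<le> K"
      using that m unfolding S_def K_def by (simp add: field_simps)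
    then have "1 \<le> m powr (K - card F)"
      using m by (simp add: ge_one_powr_ge_zero)
    also have "m powr (K - card F) = x ^ card F * m powr K"
      using m unfolding x_def by (simp add: powr_diff powr_realpow divide_inverse power_inverse)
    finally show ?thesis .
  qed
  have "real (card S) = (\<Sum>F\<in>S. 1)"
    by simp
  also have "\<dots> \<le> (\<Sum>F\<in>S. x ^ card F * m powr K)"
    using weight_ge_1 by (rule sum_mono)
  also have "\<dots> \<le> (\<Sum>F\<in>Pow R. x ^ card F * m powr K)"
    using fin x by (intro sum_mono2) (auto simp: S_def)
  also have "\<dots> = (1 + x) ^ card R * m powr K"
    using prod_add[OF fin, of "\<lambda>_. x" "\<lambda>_. 1"]
    by (simp add: sum_distrib_right add.commute)
  also have "\<dots> \<le> exp x ^ card R * m powr K"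
    using x by (intro mult_right_mono power_mono) (auto simp: add.commute)
  also have "exp x ^ card R = exp 1 powr K"
    unfolding K_def x_def by (simp add: exp_of_nat_mult[symmetric] powr_def)
  also have "exp 1 powr K * m powr K = (exp 1 * m) powr K"
    using m by (simp add: powr_mult)
  finally show ?thesis
    unfolding S_def K_def .
qed

lemma log_le_mult_log_if_le_powr:
  fixes a b K :: real
  assumes "0 \<le> a" "a \<le> b powr K" "1 \<le> b" "0 \<le> K"
  shows "log 2 a \<le> K * log 2 b"
proof (cases "a = 0")
  case True
  then show ?thesis
    using assms by (simp add: log_def)
next
  case False
  then have "log 2 a \<le> log 2 (b powr K)"
    using assms by (subst log_le_cancel_iff) auto
  then show ?thesis
    using assms by (simp add: log_powr)
qed

subsection \<open>Fan encodings of sparse families\<close>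

definition sparse_family :: "nat \<Rightarrow> 'a set set \<Rightarrow> bool" where
  "sparse_family r H \<longleftrightarrow>
     (\<forall>U\<in>H. finite U \<and> r \<le> card U) \<and> (\<forall>U\<in>H. \<forall>V\<in>H. U \<noteq> V \<longrightarrow> card (U \<inter> V) < r - 1)"

definition fan_core :: "nat \<Rightarrow> 'a set \<Rightarrow> 'a set" where
  "fan_core r U = (SOME X. X \<subseteq> U \<and> card X = r - 1)"

definition fan :: "nat \<Rightarrow> 'a set \<Rightarrow> 'a set set" where
  "fan r U = (\<lambda>y. insert y (fan_core r U)) ` (U - fan_core r U)"

definition fan_encoding :: "nat \<Rightarrow> 'a set set \<Rightarrow> 'a set set" where
  "fan_encoding r H = \<Union> (fan r ` H)"

lemma sparse_family_common_subset_eq: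
  assumes "sparse_family r H" "U \<in> H" "V \<in> H" "X \<subseteq> U \<inter> V" "card X = r - 1"
  shows "U = V"
proof -
  have "finite (U \<inter> V)"
    using assms(1,2) unfolding sparse_family_def by auto
  then have "r - 1 \<le> card (U \<inter> V)"
    using assms(4,5) card_mono by metis
  then show ?thesis
    using assms(1-3) unfolding sparse_family_def by fastforce
qed

lemma fan_core:
  assumes "r \<le> card U"
  shows "fan_core r U \<subseteq> U" "card (fan_core r U) = r - 1"
proof -
  have "\<exists>X. X \<subseteq> U \<and> card X = r - 1"
    using assms by (meson diff_le_self le_trans obtain_subset_with_card_n)
  then have "fan_core r U \<subseteq> U \<and> card (fan_core r U) = r - 1"
    unfolding fan_core_def by (rule someI_ex)
  then show "fan_core r U \<subseteq> U" "card (fan_core r U) = r - 1"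
    by auto
qed

lemma fan_subset: "S \<in> fan r U \<Longrightarrow> r \<le> card U \<Longrightarrow> S \<subseteq> U"
  using fan_core unfolding fan_def by blast

lemma card_fan_member:
  assumes "S \<in> fan r U" "r \<le> card U" "finite U" "1 \<le> r"
  shows "card S = r"
proof -
  obtain y where "y \<in> U - fan_core r U" "S = insert y (fan_core r U)"
    using assms(1) unfolding fan_def by auto
  moreover have "finite (fan_core r U)"
    using fan_core(1)[OF assms(2)] assms(3) finite_subset by auto
  ultimately show ?thesis
    using fan_core(2)[OF assms(2)] assms(4) by auto
qed

lemma card_fan_le: "finite U \<Longrightarrow> r \<le> card U \<Longrightarrow> card (fan r U) \<le> card U - (r - 1)"
  unfolding fan_def
  by (metis card_Diff_subset card_image_le fan_core finite_Diff finite_subset)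

text \<open>
  A member \<open>U\<close> of \<open>H\<close> is recovered from its fan: the \<open>r\<close>-sets \<open>X \<union> {y}\<close> all lie in members
  of \<open>H'\<close> containing the common \<open>(r - 1)\<close>-set \<open>X\<close>, so by sparseness in a single one.
\<close>
lemma fan_encoding_covers:
  assumes H: "sparse_family r H" and H': "sparse_family r H'"
    and enc: "fan_encoding r H = fan_encoding r H'" and U: "U \<in> H" and r: "1 \<le> r"
  shows "\<exists>U'\<in>H'. U \<subseteq> U'"
proof -
  have rU: "r \<le> card U"
    using H U unfolding sparse_family_def by auto
  define X where "X = fan_core r U"
  have X: "X \<subseteq> U" "card X = r - 1"
    using fan_core[OF rU] X_def by auto
  have covered: "\<exists>U'\<in>H'. insert z X \<subseteq> U'" if "z \<in> U - X" for z
  proof -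
    have "insert z X \<in> fan r U"
      using that unfolding X_def fan_def by blast
    then have "insert z X \<in> fan_encoding r H"
      using U unfolding fan_encoding_def by blast
    then have "insert z X \<in> fan_encoding r H'"
      using enc by simp
    then obtain U' where U': "U' \<in> H'" "insert z X \<in> fan r U'"
      unfolding fan_encoding_def by blast
    have "r \<le> card U'"
      using H' U'(1) unfolding sparse_family_def by auto
    then have "insert z X \<subseteq> U'"
      by (rule fan_subset[OF U'(2)])
    then show ?thesis
      using U'(1) by blast
  qed
  have "U \<noteq> X"
    using X(2) rU r by auto
  then obtain y where "y \<in> U - X"
    using X(1) by blast
  then obtain U' where U': "U' \<in> H'" "insert y X \<subseteq> U'"
    using covered by blast
  have "z \<in> U'" if z: "z \<in> U" for z
  proof (cases "z \<in> X")
    case False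
    then obtain U'' where "U'' \<in> H'" "insert z X \<subseteq> U''"
      using covered z by blast
    moreover have "U'' = U'"
      using sparse_family_common_subset_eq[OF H' \<open>U'' \<in> H'\<close> U'(1) _ X(2)]
        \<open>insert z X \<subseteq> U''\<close> U'(2) by blast
    ultimately show ?thesis
      by blast
  qed (use U'(2) in blast)
  then show ?thesis
    using U'(1) by blast
qed

lemma fan_encoding_inj:
  assumes H: "sparse_family r H" and H': "sparse_family r H'"
    and enc: "fan_encoding r H = fan_encoding r H'" and r: "1 \<le> r"
  shows "H = H'"
proof -
  have "H1 \<subseteq> H2"
    if H1: "sparse_family r H1" and H2: "sparse_family r H2"
      and enc: "fan_encoding r H1 = fan_encoding r H2" for H1 H2 :: "'a set set"
  proof
    fix U assume U: "U \<in> H1"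
    obtain U' where U': "U' \<in> H2" "U \<subseteq> U'"
      using fan_encoding_covers[OF H1 H2 enc U r] by blast
    obtain W where W: "W \<in> H1" "U' \<subseteq> W"
      using fan_encoding_covers[OF H2 H1 enc[symmetric] U'(1) r] by blast
    have "r \<le> card U"
      using H1 U unfolding sparse_family_def by auto
    then obtain X where X: "X \<subseteq> U" "card X = r - 1"
      by (meson diff_le_self le_trans obtain_subset_with_card_n)
    then have "X \<subseteq> U \<inter> W"
      using U' W by blast
    then have "U = W"
      using sparse_family_common_subset_eq[OF H1 U W(1)] X(2) by blast
    then show "U \<in> H2"
      using U' W by (metis subset_antisym)
  qed
  then show ?thesis
    using H H' enc by (metis subset_antisym)
qed

lemma fan_encoding_subset:
  assumes "sparse_family r H" "\<forall>U\<in>H. U \<subseteq> E" "1 \<le> r"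
  shows "fan_encoding r H \<subseteq> {S. S \<subseteq> E \<and> card S = r}"
proof
  fix S assume "S \<in> fan_encoding r H"
  then obtain U where U: "U \<in> H" "S \<in> fan r U"
    unfolding fan_encoding_def by blast
  have "finite U" "r \<le> card U"
    using assms(1) U(1) unfolding sparse_family_def by auto
  then show "S \<in> {S. S \<subseteq> E \<and> card S = r}"
    using fan_subset[OF U(2)] card_fan_member[OF U(2)] assms(2,3) U(1) by auto
qed

text \<open>
  Each \<open>U \<in> H\<close> owns \<open>C(|U|, r - 1) \<ge> r (|U| - r + 1)\<close> subsets of size \<open>r - 1\<close>, and by
  sparseness no such subset is owned twice.
\<close>
lemma mult_card_fan_encoding_le:
  assumes H: "sparse_family r H" and HE: "\<forall>U\<in>H. U \<subseteq> E" and E: "finite E" and r: "3 \<le> r"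
  shows "r * card (fan_encoding r H) \<le> card E choose (r - 1)"
proof -
  define P where "P U = {X. X \<subseteq> U \<and> card X = r - 1}" for U :: "'a set"
  have fin_H: "finite H"
    using HE E by (meson Pow_iff finite_Pow_iff finite_subset subsetI)
  have fin_U: "finite U" "r \<le> card U" if "U \<in> H" for U
    using H that unfolding sparse_family_def by auto
  have "r * card (fan_encoding r H) \<le> r * (\<Sum>U\<in>H. card (fan r U))"
    unfolding fan_encoding_def by (intro mult_le_mono2 card_UN_le fin_H)
  also have "\<dots> \<le> (\<Sum>U\<in>H. r * (card U - (r - 1)))"
    unfolding sum_distrib_left by (intro sum_mono mult_le_mono2 card_fan_le fin_U)
  also have "\<dots> \<le> (\<Sum>U\<in>H. card (P U))"
  proof (rule sum_mono)
    fix U assume "U \<in> H"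
    then show "r * (card U - (r - 1)) \<le> card (P U)"
      unfolding P_def using fin_U n_subsets[of U "r - 1"] mult_diff_le_choose_pred[OF r, of "card U"]
      by simp
  qed
  also have "\<dots> = card (\<Union> (P ` H))"
  proof (rule card_UN_disjoint[symmetric, OF fin_H])
    show "\<forall>U\<in>H. finite (P U)"
      using fin_U unfolding P_def by (auto intro: rev_finite_subset[of "Pow _"])
    show "\<forall>U\<in>H. \<forall>V\<in>H. U \<noteq> V \<longrightarrow> P U \<inter> P V = {}"
      using sparse_family_common_subset_eq[OF H] unfolding P_def by blast
  qed
  also have "\<dots> \<le> card {X. X \<subseteq> E \<and> card X = r - 1}"
  proof (rule card_mono)
    show "finite {X. X \<subseteq> E \<and> card X = r - 1}"
      using E by (auto intro: rev_finite_subset[of "Pow E"])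
    show "\<Union> (P ` H) \<subseteq> {X. X \<subseteq> E \<and> card X = r - 1}"
      using HE unfolding P_def by blast
  qed
  also have "\<dots> = card E choose (r - 1)"
    using n_subsets E by blast
  finally show ?thesis .
qed

subsection \<open>Paving matroids are determined by their nontrivial hyperplanes\<close>

definition rank_deficient :: "'a set \<Rightarrow> 'a set set \<Rightarrow> nat \<Rightarrow> 'a set \<Rightarrow> bool" where
  "rank_deficient E I r U \<longleftrightarrow> U \<subseteq> E \<and> r \<le> card U \<and> (\<forall>S. S \<subseteq> U \<and> card S = r \<longrightarrow> S \<notin> I)"

text \<open>For a paving matroid of rank \<open>r\<close> these are exactly its hyperplanes with at least \<open>r\<close> elements.\<close>
definition nontrivial_hyperplanes :: "'a set \<Rightarrow> 'a set set \<Rightarrow> nat \<Rightarrow> 'a set set" where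
  "nontrivial_hyperplanes E I r =
     {U. rank_deficient E I r U \<and> (\<forall>V. rank_deficient E I r V \<and> U \<subseteq> V \<longrightarrow> V = U)}"

locale paving_matroid =
  fixes E :: "'a set" and I :: "'a set set" and r :: nat
  assumes finite_ground: "finite E" and indep: "matroid_indep E I"
    and rank: "matroid_rank I = r" and paving: "paving E I" and rank_pos: "1 \<le> r"
begin

lemma indep_subset_ground: "A \<in> I \<Longrightarrow> A \<subseteq> E"
  using indep unfolding matroid_indep_def by blast

lemma indep_augment: "A \<in> I \<Longrightarrow> B \<in> I \<Longrightarrow> card A < card B \<Longrightarrow> \<exists>x\<in>B - A. insert x A \<in> I"
  using indep unfolding matroid_indep_def by blast

lemma card_indep_le: "A \<in> I \<Longrightarrow> card A \<le> r"
proof -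
  have "finite I"
    using indep_subset_ground finite_ground by (meson Pow_iff finite_Pow_iff finite_subset subsetI)
  then show "A \<in> I \<Longrightarrow> card A \<le> r"
    using rank unfolding matroid_rank_def by auto
qed

text \<open>A minimal dependent set of size below \<open>r\<close> would be a circuit violating pavingness.\<close>
lemma indep_if_card_less: "A \<subseteq> E \<Longrightarrow> card A < r \<Longrightarrow> A \<in> I"
proof (induction "card A" arbitrary: A rule: less_induct)
  case less
  have "finite A"
    using less.prems(1) finite_ground finite_subset by blast
  then have "A - {x} \<in> I" if "x \<in> A" for x
    using less that card_Diff1_less[of A x] by (metis Diff_subset order.strict_trans subset_trans)
  then have "A \<notin> I \<Longrightarrow> matroid_circuit E I A"
    using less.prems(1) unfolding matroid_circuit_def by blast
  then show "A \<in> I"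
    using paving rank less.prems(2) unfolding paving_def by fastforce
qed

lemma rank_deficient_Un:
  assumes U: "rank_deficient E I r U" and V: "rank_deficient E I r V"
    and UV: "r - 1 \<le> card (U \<inter> V)"
  shows "rank_deficient E I r (U \<union> V)"
proof -
  have fin: "finite U" "finite V"
    using U V finite_ground unfolding rank_deficient_def by (auto intro: finite_subset)
  obtain X where X: "X \<subseteq> U \<inter> V" "card X = r - 1" "finite X"
    using UV by (rule obtain_subset_with_card_n)
  have "X \<in> I"
    using X U rank_pos by (intro indep_if_card_less) (auto simp: rank_deficient_def)
  have "C \<notin> I" if C: "C \<subseteq> U \<union> V" "card C = r" for C
  proof
    assume "C \<in> I"
    have "card X < card C"
      using X(2) C(2) rank_pos by simp
    then obtain x where x: "x \<in> C - X" "insert x X \<in> I"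
      using indep_augment[OF \<open>X \<in> I\<close> \<open>C \<in> I\<close>] by blast
    then have "card (insert x X) = r"
      using X rank_pos by auto
    moreover have "insert x X \<subseteq> U \<or> insert x X \<subseteq> V"
      using x(1) C(1) X(1) by blast
    ultimately show False
      using U V x(2) unfolding rank_deficient_def by blast
  qed
  moreover have "r \<le> card (U \<union> V)"
    using U fin card_mono[of "U \<union> V" U] unfolding rank_deficient_def by auto
  ultimately show ?thesis
    using U V unfolding rank_deficient_def by blast
qed

lemma nontrivial_hyperplane_exists:
  assumes "rank_deficient E I r A"
  shows "\<exists>U\<in>nontrivial_hyperplanes E I r. A \<subseteq> U"
proof -
  have "finite {V. rank_deficient E I r V}"
    using finite_ground by (auto intro: rev_finite_subset[of "Pow E"] simp: rank_deficient_def)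
  then have "\<exists>U\<in>{V. rank_deficient E I r V}. A \<subseteq> U \<and>
      (\<forall>V\<in>{V. rank_deficient E I r V}. U \<subseteq> V \<longrightarrow> U = V)"
    by (rule finite_has_maximal2) (use assms in simp)
  then show ?thesis
    unfolding nontrivial_hyperplanes_def by fastforce
qed

lemma nontrivial_hyperplanes_subset_ground: "\<forall>U\<in>nontrivial_hyperplanes E I r. U \<subseteq> E"
  unfolding nontrivial_hyperplanes_def rank_deficient_def by blast

lemma sparse_family_nontrivial_hyperplanes: "sparse_family r (nontrivial_hyperplanes E I r)"
proof -
  have "card (U \<inter> V) < r - 1"
    if "U \<in> nontrivial_hyperplanes E I r" "V \<in> nontrivial_hyperplanes E I r" "U \<noteq> V" for U V
  proof (rule ccontr)
    assume "\<not> ?thesis"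
    then have "rank_deficient E I r (U \<union> V)"
      using that rank_deficient_Un unfolding nontrivial_hyperplanes_def by fastforce
    then show False
      using that unfolding nontrivial_hyperplanes_def by blast
  qed
  moreover have "finite U" "r \<le> card U" if "U \<in> nontrivial_hyperplanes E I r" for U
    using that finite_ground unfolding nontrivial_hyperplanes_def rank_deficient_def
    by (auto intro: finite_subset)
  ultimately show ?thesis
    unfolding sparse_family_def by blast
qed

lemma indep_eq_nontrivial_hyperplanes:
  "I = {A. A \<subseteq> E \<and> (card A < r \<or> card A = r \<and> (\<forall>U\<in>nontrivial_hyperplanes E I r. \<not> A \<subseteq> U))}"
proof (intro set_eqI iffI)
  fix A assume "A \<in> I"
  then show "A \<in> {A. A \<subseteq> E \<and> (card A < r \<or> card A = r \<and> (\<forall>U\<in>nontrivial_hyperplanes E I r. \<not> A \<subseteq> U))}"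
    using card_indep_le indep_subset_ground
    unfolding nontrivial_hyperplanes_def rank_deficient_def by fastforce
next
  fix A assume A: "A \<in> {A. A \<subseteq> E \<and> (card A < r \<or> card A = r \<and> (\<forall>U\<in>nontrivial_hyperplanes E I r. \<not> A \<subseteq> U))}"
  show "A \<in> I"
  proof (cases "card A < r")
    case True
    then show ?thesis
      using A indep_if_card_less by blast
  next
    case False
    show ?thesis
    proof (rule ccontr)
      assume "A \<notin> I"
      have "finite A"
        using A finite_ground by (auto intro: finite_subset)
      have "card A = r"
        using A False by auto
      then have "S = A" if "S \<subseteq> A" "card S = r" for S
        using card_subset_eq[OF \<open>finite A\<close> that(1)] that(2) by simp
      then have "rank_deficient E I r A"
        using A False \<open>A \<notin> I\<close> unfolding rank_deficient_def by auto
      then show False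
        using nontrivial_hyperplane_exists A False by blast
    qed
  qed
qed

end

lemma inj_on_fan_encoding_paving:
  assumes "finite E" "1 \<le> r"
  shows "inj_on (\<lambda>I. fan_encoding r (nontrivial_hyperplanes E I r))
           {I. matroid_indep E I \<and> matroid_rank I = r \<and> paving E I}"
proof (rule inj_onI)
  fix I1 I2
  assume "I1 \<in> {I. matroid_indep E I \<and> matroid_rank I = r \<and> paving E I}"
    "I2 \<in> {I. matroid_indep E I \<and> matroid_rank I = r \<and> paving E I}"
  then interpret M1: paving_matroid E I1 r + M2: paving_matroid E I2 r
    using assms by (simp_all add: paving_matroid_def)
  assume "fan_encoding r (nontrivial_hyperplanes E I1 r) = fan_encoding r (nontrivial_hyperplanes E I2 r)"
  then have "nontrivial_hyperplanes E I1 r = nontrivial_hyperplanes E I2 r"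
    by (rule fan_encoding_inj[OF M1.sparse_family_nontrivial_hyperplanes
          M2.sparse_family_nontrivial_hyperplanes _ assms(2)])
  then show "I1 = I2"
    by (metis M1.indep_eq_nontrivial_hyperplanes M2.indep_eq_nontrivial_hyperplanes)
qed

lemma card_paving_matroids_le:
  assumes E: "finite E" and r: "3 \<le> r" "r \<le> card E"
  shows "card {I. matroid_indep E I \<and> matroid_rank I = r \<and> paving E I}
           \<le> card {F. F \<subseteq> {S. S \<subseteq> E \<and> card S = r} \<and>
                      real (card E - r + 1) * card F \<le> card {S. S \<subseteq> E \<and> card S = r}}"
proof (rule card_inj_on_le[OF inj_on_fan_encoding_paving[OF E]])
  let ?F = "\<lambda>I. fan_encoding r (nontrivial_hyperplanes E I r)"
  have encoded: "?F I \<subseteq> {S. S \<subseteq> E \<and> card S = r}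
        \<and> real (card E - r + 1) * card (?F I) \<le> card {S. S \<subseteq> E \<and> card S = r}"
    if "I \<in> {I. matroid_indep E I \<and> matroid_rank I = r \<and> paving E I}" for I
  proof -
    interpret paving_matroid E I r
      using that E r by unfold_locales auto
    have "r * ((card E - r + 1) * card (?F I)) = (card E - r + 1) * (r * card (?F I))"
      by (simp only: mult.left_commute)
    also have "\<dots> \<le> (card E - r + 1) * (card E choose (r - 1))"
      using mult_card_fan_encoding_le[OF sparse_family_nontrivial_hyperplanes
          nontrivial_hyperplanes_subset_ground E r(1)]
      by (rule mult_le_mono2)
    also have "\<dots> = r * (card E choose r)"
      using mult_choose_eq_choose_pred[of r "card E"] r by simp
    finally have "(card E - r + 1) * card (?F I) \<le> card E choose r"
      using rank_pos by simp
    then have "real (card E - r + 1) * card (?F I) \<le> card {S. S \<subseteq> E \<and> card S = r}"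
      unfolding n_subsets[OF E] by (metis of_nat_le_iff of_nat_mult)
    moreover have "?F I \<subseteq> {S. S \<subseteq> E \<and> card S = r}"
      by (rule fan_encoding_subset[OF sparse_family_nontrivial_hyperplanes
          nontrivial_hyperplanes_subset_ground rank_pos])
    ultimately show ?thesis
      by blast
  qed
  then show "?F ` {I. matroid_indep E I \<and> matroid_rank I = r \<and> paving E I}
      \<subseteq> {F. F \<subseteq> {S. S \<subseteq> E \<and> card S = r} \<and>
             real (card E - r + 1) * card F \<le> card {S. S \<subseteq> E \<and> card S = r}}"
    by (intro image_subsetI CollectI) simp
  show "finite {F. F \<subseteq> {S. S \<subseteq> E \<and> card S = r} \<and>
                  real (card E - r + 1) * card F \<le> card {S. S \<subseteq> E \<and> card S = r}}"
    using E by (auto intro: rev_finite_subset[of "Pow {S. S \<subseteq> E \<and> card S = r}"])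
qed (use r in simp)

theorem theorem1p4:
  fixes n r :: nat
  assumes "3 \<le> r" and "r \<le> n"
  shows "log 2 (real (num_paving n r))
           \<le> 1 / real (n - r + 1) * real (n choose r) * log 2 (exp 1 * real (n - r + 1))"
proof -
  define R where "R = {S. S \<subseteq> {1..n} \<and> card S = r}"
  define m where "m = real (n - r + 1)"
  have m: "1 \<le> m"
    unfolding m_def by simp
  have "finite R"
    unfolding R_def by (auto intro: rev_finite_subset[of "Pow {1..n}"])
  have "real (num_paving n r) \<le> real (card {F. F \<subseteq> R \<and> m * card F \<le> card R})"
    using card_paving_matroids_le[of "{1..n}" r] assms
    unfolding num_paving_def R_def m_def by simp
  also have "\<dots> \<le> (exp 1 * m) powr (card R / m)"
    using card_bounded_subsets_le_powr[OF \<open>finite R\<close> m] by simp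
  finally have "log 2 (num_paving n r) \<le> card R / m * log 2 (exp 1 * m)"
    using m mult_mono[of 1 "exp 1" 1 m] by (intro log_le_mult_log_if_le_powr) auto
  moreover have "card R = n choose r"
    unfolding R_def using n_subsets[of "{1..n}" r] by simp
  ultimately show ?thesis
    unfolding m_def by simp
qed

end
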